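(* Let $u\in\Sigma^*$, $v\in\Sigma^+$. Let $(x_1,y_1)$ be the shortest form of $(u,v)$ and $n=|y_1|$. For $1\leq k<n$ let $(x_{k+1},y_{k+1})$ be the shortest form of the decomposition $(x_ky_k[1],\ y_k[2\cdots n]\,y_k[1])$. Let $\mathcal{D}_{u\$v}$ be a finite automaton over $\Sigma\cup\{\$\}$ (with $\$\notin\Sigma$) recognizing $\bigcup_{k=1}^{n}x_ky_k^*\,\$\,y_k^+$. Then $L(\mathcal{D}_{u\$v})=\{u'\$v'\mid u'\in\Sigma^*,\ v'\in\Sigma^+,\ u'v'^\omega=uv^\omega\}$.
   Context: A decomposition of an $\omega$-word $w$ is a pair $(u,v)$ with $u\in\Sigma^*$, $v\in\Sigma^+$ and $w=uv^\omega$. For a word $z$, $z[i]$ is its $i$-th letter and $z[i\cdots k]$ the subword from position $i$ to $k$ inclusive. Write $r\unlhd v$ if $r$ is a nonempty prefix of $v$, and $r\lhd v$ if moreover $r\neq v$. A smallest period of $(u,v)$ is a word $r$ with $r\unlhd v$, $r^\omega=v^\omega$, and $t^\omega\neq r^\omega$ for every $t\lhd r$. If $y$ is the smallest period of $(u,v)$, the shortest form of $(u,v)$ is the pair $(x,y)$ where $u=xy^i$, $v=y^j$ for some $i\geq0,j\geq1$ and $x$ is the shortest word with $u\in xy^*$. *)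

theory Defs
  imports "HOL-Library.Omega_Words_Fun"
begin

(* Finite words are lists, omega-words are 'a word = nat => 'a (Omega_Words_Fun);
  u \<frown> v\<^sup>\<omega> is u v^omega. *)

definition is_pref :: "'a list \<Rightarrow> 'a list \<Rightarrow> bool" where
  "is_pref r v \<longleftrightarrow> r \<noteq> [] \<and> (\<exists>z. v = r @ z)"

definition is_spref :: "'a list \<Rightarrow> 'a list \<Rightarrow> bool" where
  "is_spref r v \<longleftrightarrow> is_pref r v \<and> r \<noteq> v"

definition smallest_period :: "'a list \<Rightarrow> 'a list \<Rightarrow> 'a list \<Rightarrow> bool" where
  "smallest_period u v r \<longleftrightarrow>
     is_pref r v \<and> r\<^sup>\<omega> = v\<^sup>\<omega> \<and> (\<forall>t. is_spref t r \<longrightarrow> t\<^sup>\<omega> \<noteq> r\<^sup>\<omega>)"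

definition pow :: "'a list \<Rightarrow> nat \<Rightarrow> 'a list" where
  "pow y i = concat (replicate i y)"

definition is_shortest_form :: "'a list \<Rightarrow> 'a list \<Rightarrow> 'a list \<Rightarrow> 'a list \<Rightarrow> bool" where
  "is_shortest_form u v x y \<longleftrightarrow>
     smallest_period u v y \<and>
     (\<exists>i. u = x @ pow y i) \<and> (\<exists>j\<ge>1. v = pow y j) \<and>
     (\<forall>x'. (\<exists>i. u = x' @ pow y i) \<longrightarrow> length x \<le> length x')"

definition shortest_form :: "'a list \<Rightarrow> 'a list \<Rightarrow> 'a list \<times> 'a list" where
  "shortest_form u v = (THE p. is_shortest_form u v (fst p) (snd p))"

(* sf_seq u v k = (x_{k+1}, y_{k+1}) in the paper's 1-based numbering. *)
fun sf_seq :: "'a list \<Rightarrow> 'a list \<Rightarrow> nat \<Rightarrow> 'a list \<times> 'a list" where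
  "sf_seq u v 0 = shortest_form u v"
| "sf_seq u v (Suc k) =
     (let (x, y) = sf_seq u v k in shortest_form (x @ [hd y]) (tl y @ [hd y]))"

datatype 'a dsym = Sym 'a | Dollar

definition D_lang :: "'a list \<Rightarrow> 'a list \<Rightarrow> 'a dsym list set" where
  "D_lang u v = (\<Union>k < length (snd (sf_seq u v 0)).
     {map Sym (fst (sf_seq u v k) @ pow (snd (sf_seq u v k)) i) @ [Dollar]
        @ map Sym (pow (snd (sf_seq u v k)) j) | i j. j \<ge> 1})"

end

theory Submission
  imports Defs
begin

text \<open>Let w = u v^\<omega>. Every decomposition (u', v') of w has a shortest form (x, z) with z
  primitive, u' in x z* and v' in z+, and x is the only word not ending in z with x z^\<omega> = w.
  Comparing z^\<omega> with y_1^\<omega> far enough to the right shows that z is a rotation of y_1 by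
  some k < n. The sequence (x_k, y_k) runs through exactly these pairs: y_(k+1) is the rotation
  of y_1 by k, and x_(k+1) is the word not ending in it with x_(k+1) y_(k+1)^\<omega> = w.\<close>

definition is_period :: "'a word \<Rightarrow> nat \<Rightarrow> bool" where
  "is_period s q \<longleftrightarrow> (\<forall>n. s (n + q) = s n)"

text \<open>Equivalent to y not being a proper power, but stated through the periods of y^\<omega>.\<close>
definition primitive :: "'a list \<Rightarrow> bool" where
  "primitive y \<longleftrightarrow> y \<noteq> [] \<and> (\<forall>q. 0 < q \<longrightarrow> is_period (y\<^sup>\<omega>) q \<longrightarrow> length y \<le> q)"

lemma is_period_mult: "is_period s p \<Longrightarrow> is_period s (k * p)"
  by (induction k) (simp_all add: is_period_def add.assoc[symmetric])

lemma is_period_diff: "is_period s a \<Longrightarrow> is_period s b \<Longrightarrow> a \<le> b \<Longrightarrow> is_period s (b - a)"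
  unfolding is_period_def by (metis add.assoc le_add_diff_inverse2)

lemma is_period_mod: "is_period s p \<Longrightarrow> is_period s q \<Longrightarrow> is_period s (q mod p)"
  using is_period_diff[OF is_period_mult[of s p "q div p"] _ div_times_less_eq_dividend]
  by (simp add: minus_div_mult_eq_mod)

lemma is_period_nth_mod: "is_period s p \<Longrightarrow> s (n mod p) = s n"
  using is_period_mult[of s p "n div p"] unfolding is_period_def
  by (metis mod_div_mult_eq)

lemma is_period_iter: "y \<noteq> [] \<Longrightarrow> is_period (y\<^sup>\<omega>) (length y)"
  by (simp add: is_period_def)

lemma iter_take_is_period:
  assumes "0 < q" "q \<le> length r" "is_period (r\<^sup>\<omega>) q"
  shows "(take q r)\<^sup>\<omega> = r\<^sup>\<omega>"
proof
  fix n
  have "n mod q < length r" "0 < length r"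
    using assms by (meson mod_less_divisor order_less_le_trans, linarith)
  then have "(take q r)\<^sup>\<omega> n = r\<^sup>\<omega> (n mod q)" using assms by simp
  also have "\<dots> = r\<^sup>\<omega> n" using is_period_nth_mod[OF assms(3)] .
  finally show "(take q r)\<^sup>\<omega> n = r\<^sup>\<omega> n" .
qed

lemma suffix_iter: "y \<noteq> [] \<Longrightarrow> suffix a (y\<^sup>\<omega>) = (rotate a y)\<^sup>\<omega>"
  by (rule ext) (simp add: nth_rotate mod_add_right_eq)

text \<open>Shift by a multiple of the known period p far enough to land inside the suffix.\<close>
lemma is_period_suffix:
  assumes "is_period s p" "0 < p" "is_period (suffix a s) q"
  shows "is_period s q"
  unfolding is_period_def
proof
  fix n
  have shift: "s (m + a * p) = s m" for m
    using is_period_mult[OF assms(1), of a] by (simp add: is_period_def)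
  have "a \<le> n + a * p" using assms(2) by (simp add: trans_le_add2)
  then obtain m where m: "n + a * p = a + m" using le_Suc_ex by blast
  have idx: "a + (m + q) = (n + q) + a * p" using m by simp
  have "s (n + q) = s (a + (m + q))" by (simp only: idx shift)
  also have "\<dots> = s (a + m)" using assms(3) by (simp add: is_period_def)
  also have "\<dots> = s n" using shift[of n] m by simp
  finally show "s (n + q) = s n" .
qed

lemma primitive_period_dvd:
  assumes "primitive y" "is_period (y\<^sup>\<omega>) q"
  shows "length y dvd q"
proof -
  have "y \<noteq> []" using assms(1) by (simp add: primitive_def)
  then have "is_period (y\<^sup>\<omega>) (q mod length y)" "q mod length y < length y"
    using is_period_mod[OF is_period_iter assms(2)] by simp_all
  then show ?thesis using assms(1) unfolding primitive_def by (metis dvd_eq_mod_eq_0 leD neq0_conv)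
qed

lemma primitive_rotate: "primitive y \<Longrightarrow> primitive (rotate a y)"
  using is_period_suffix[OF is_period_iter, of y a] suffix_iter[of y a]
  unfolding primitive_def by auto

lemma prefix_length_iter: "y \<noteq> [] \<Longrightarrow> prefix (length y) (y\<^sup>\<omega>) = y"
  by (subst iter_unroll) simp_all

lemma primitive_iter_eq:
  assumes "primitive a" "primitive b" "a\<^sup>\<omega> = b\<^sup>\<omega>"
  shows "a = b"
proof -
  have ne: "a \<noteq> []" "b \<noteq> []" using assms(1,2) by (simp_all add: primitive_def)
  have "length a \<le> length b" "length b \<le> length a"
    using assms is_period_iter[OF ne(1)] is_period_iter[OF ne(2)] unfolding primitive_def by auto
  then have "prefix (length a) (a\<^sup>\<omega>) = prefix (length b) (b\<^sup>\<omega>)" using assms(3) by simp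
  then show ?thesis by (simp only: prefix_length_iter[OF ne(1)] prefix_length_iter[OF ne(2)])
qed

lemma pow_0 [simp]: "pow y 0 = []"
  by (simp add: pow_def)

lemma pow_Suc: "pow y (Suc i) = y @ pow y i"
  by (simp add: pow_def)

lemma pow_Suc_right: "pow y (Suc i) = pow y i @ y"
  by (simp add: pow_def replicate_append_same[symmetric])

lemma length_pow [simp]: "length (pow y i) = i * length y"
  by (induction i) (simp_all add: pow_Suc)

lemma pow_conc_iter:
  assumes "y \<noteq> []"
  shows "pow y i \<frown> y\<^sup>\<omega> = y\<^sup>\<omega>"
proof (induction i)
  case (Suc i)
  have "pow y (Suc i) \<frown> y\<^sup>\<omega> = y \<frown> (pow y i \<frown> y\<^sup>\<omega>)" by (simp add: pow_Suc)
  also have "\<dots> = y\<^sup>\<omega>" unfolding Suc by (rule iter_unroll[symmetric]) (simp add: assms)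
  finally show ?case .
qed simp

lemma pow_eq_prefix_iter:
  assumes "y \<noteq> []"
  shows "pow y i = prefix (i * length y) (y\<^sup>\<omega>)"
  using prefix_conc_length[of "pow y i" "y\<^sup>\<omega>"]
  unfolding length_pow pow_conc_iter[OF assms] by (rule sym)

lemma iter_pow:
  assumes "y \<noteq> []" "1 \<le> j"
  shows "(pow y j)\<^sup>\<omega> = y\<^sup>\<omega>"
proof
  fix n
  let ?N = "j * length y"
  have N: "0 < ?N" using assms by simp
  then have "(pow y j)\<^sup>\<omega> n = pow y j ! (n mod ?N)" by simp
  also have "\<dots> = y\<^sup>\<omega> (n mod ?N)"
    using N by (simp add: pow_eq_prefix_iter[OF assms(1)] subsequence_def del: iter_nth)
  also have "\<dots> = y\<^sup>\<omega> n"
    using is_period_nth_mod[OF is_period_mult[OF is_period_iter[OF assms(1)]]] .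
  finally show "(pow y j)\<^sup>\<omega> n = y\<^sup>\<omega> n" .
qed

lemma smallest_period_primitive:
  assumes "smallest_period u v r"
  shows "primitive r" "r\<^sup>\<omega> = v\<^sup>\<omega>"
proof -
  have r: "r \<noteq> []" "\<forall>t. is_spref t r \<longrightarrow> t\<^sup>\<omega> \<noteq> r\<^sup>\<omega>"
    using assms by (auto simp: smallest_period_def is_pref_def)
  show "r\<^sup>\<omega> = v\<^sup>\<omega>" using assms by (simp add: smallest_period_def)
  show "primitive r" unfolding primitive_def
  proof (intro conjI allI impI)
    fix q assume q: "0 < q" "is_period (r\<^sup>\<omega>) q"
    show "length r \<le> q"
    proof (rule ccontr)
      assume "\<not> length r \<le> q"
      then have "is_spref (take q r) r" "(take q r)\<^sup>\<omega> = r\<^sup>\<omega>"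
        using q iter_take_is_period[of q r] unfolding is_spref_def is_pref_def
        by (auto intro: exI[of _ "drop q r"] dest: arg_cong[of _ _ length])
      then show False using r(2) by blast
    qed
  qed (rule r(1))
qed

lemma primitive_iter_eq_imp_pow:
  assumes "primitive r" "r\<^sup>\<omega> = v\<^sup>\<omega>" "v \<noteq> []"
  shows "\<exists>j\<ge>1. v = pow r j"
proof -
  have "r \<noteq> []" using assms(1) by (simp add: primitive_def)
  have "length r dvd length v"
    using primitive_period_dvd[OF assms(1)] is_period_iter[OF assms(3)] assms(2) by simp
  then obtain j where j: "length v = length r * j" by (rule dvdE)
  have "v = prefix (length v) (v\<^sup>\<omega>)" using prefix_length_iter[OF assms(3)] by simp
  also have "\<dots> = pow r j"
    using j assms(2) pow_eq_prefix_iter[OF \<open>r \<noteq> []\<close>] by (simp add: mult.commute)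
  finally show ?thesis using j assms(3) by (intro exI[of _ j]) (cases j, simp_all)
qed

lemma smallest_period_exists:
  assumes "v \<noteq> []"
  shows "\<exists>r. smallest_period u v r"
proof -
  let ?P = "\<lambda>q. 0 < q \<and> is_period (v\<^sup>\<omega>) q"
  define q where "q = (LEAST q. ?P q)"
  have v: "?P (length v)" using assms is_period_iter by auto
  have q: "?P q" unfolding q_def by (rule LeastI[of ?P, OF v])
  have q_min: "q \<le> q'" if "?P q'" for q' unfolding q_def by (rule Least_le) (rule that)
  have qv: "q \<le> length v" using q_min[OF v] .
  then have iter_r: "(take q v)\<^sup>\<omega> = v\<^sup>\<omega>" using iter_take_is_period q by blast
  have "smallest_period u v (take q v)" unfolding smallest_period_def
  proof (intro conjI allI impI notI)
    show "is_pref (take q v) v" unfolding is_pref_def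
    proof
      show "take q v \<noteq> []" using q assms by simp
      show "\<exists>z. v = take q v @ z" by (rule exI[of _ "drop q v"]) simp
    qed
    show "(take q v)\<^sup>\<omega> = v\<^sup>\<omega>" by (rule iter_r)
  next
    fix t assume t: "is_spref t (take q v)" "t\<^sup>\<omega> = (take q v)\<^sup>\<omega>"
    then obtain z where tz: "take q v = t @ z" "z \<noteq> []" "t \<noteq> []"
      by (auto simp: is_spref_def is_pref_def)
    have "length (take q v) = length (t @ z)" using tz(1) by simp
    then have "length t < q" using qv tz(2) by simp
    moreover have "is_period (v\<^sup>\<omega>) (length t)"
      using t(2) iter_r is_period_iter[OF tz(3)] by simp
    ultimately show False using q_min[of "length t"] tz(3) by simp
  qed
  then show ?thesis ..
qed

lemma smallest_period_unique:
  assumes "smallest_period u v r" "smallest_period u v r'"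
  shows "r = r'"
  using smallest_period_primitive[OF assms(1)] smallest_period_primitive[OF assms(2)]
  by (intro primitive_iter_eq) simp_all

lemma is_shortest_form_ex1:
  assumes "v \<noteq> []"
  shows "\<exists>!p. is_shortest_form u v (fst p) (snd p)"
proof -
  obtain y where y: "smallest_period u v y" using smallest_period_exists assms by blast
  obtain j where j: "j \<ge> 1" "v = pow y j"
    using primitive_iter_eq_imp_pow[OF smallest_period_primitive[OF y] assms] by blast
  let ?P = "\<lambda>x. \<exists>i. u = x @ pow y i"
  have "?P u" by (rule exI[of _ 0]) simp
  then obtain x where x: "?P x" "\<forall>x'. ?P x' \<longrightarrow> length x \<le> length x'"
    using ex_has_least_nat[of ?P u length] by blast
  show ?thesis
  proof (rule ex1I[of _ "(x, y)"])
    show "is_shortest_form u v (fst (x, y)) (snd (x, y))"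
      unfolding is_shortest_form_def using y x j by auto
    fix p assume p: "is_shortest_form u v (fst p) (snd p)"
    then have "snd p = y" using smallest_period_unique y unfolding is_shortest_form_def by blast
    with p x have "?P (fst p)" "length (fst p) = length x"
      unfolding is_shortest_form_def by (auto intro: le_antisym)
    then have "fst p = x" using x(1) by (metis append_eq_append_conv)
    with \<open>snd p = y\<close> show "p = (x, y)" by (simp add: prod_eq_iff)
  qed
qed

lemma shortest_form_props:
  assumes "v \<noteq> []" "shortest_form u v = (x, y)"
  shows "primitive y" "\<exists>i. u = x @ pow y i" "\<exists>j\<ge>1. v = pow y j"
    and "x \<frown> y\<^sup>\<omega> = u \<frown> v\<^sup>\<omega>" "\<forall>x'. x \<noteq> x' @ y"
proof -
  have sf: "is_shortest_form u v x y"
    using theI'[OF is_shortest_form_ex1[OF assms(1), of u]] assms(2) unfolding shortest_form_def by simp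
  then show "primitive y" "\<exists>i. u = x @ pow y i" "\<exists>j\<ge>1. v = pow y j"
    using smallest_period_primitive unfolding is_shortest_form_def by blast+
  then have "y \<noteq> []" by (simp add: primitive_def)
  obtain i where i: "u = x @ pow y i" using \<open>\<exists>i. u = x @ pow y i\<close> ..
  show "x \<frown> y\<^sup>\<omega> = u \<frown> v\<^sup>\<omega>"
    using sf i pow_conc_iter[OF \<open>y \<noteq> []\<close>, of i] smallest_period_primitive(2)
    unfolding is_shortest_form_def by (metis conc_conc)
  show "\<forall>x'. x \<noteq> x' @ y"
  proof (intro allI notI)
    fix x' assume "x = x' @ y"
    then have "u = x' @ pow y (Suc i)" using i by (simp add: pow_Suc)
    then have "length x \<le> length x'" using sf unfolding is_shortest_form_def by blast
    then show False using \<open>x = x' @ y\<close> \<open>y \<noteq> []\<close> by simp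
  qed
qed

lemma conc_iter_eq_imp_pow:
  assumes "primitive z" "a \<frown> z\<^sup>\<omega> = c \<frown> z\<^sup>\<omega>" "length a \<le> length c"
  shows "\<exists>k. c = a @ pow z k"
proof -
  define d where "d = length c - length a"
  have c: "c = a @ prefix d (z\<^sup>\<omega>)"
    using arg_cong[OF assms(2), of "prefix (length c)"] assms(3) by (simp add: d_def)
  have "suffix d (z\<^sup>\<omega>) = z\<^sup>\<omega>"
    using arg_cong[OF assms(2), of "suffix (length c)"] assms(3) by (simp add: d_def)
  then have "is_period (z\<^sup>\<omega>) d" unfolding is_period_def by (metis add.commute suffix_nth)
  then obtain k where "d = k * length z"
    using primitive_period_dvd[OF assms(1)] by (metis dvd_def mult.commute)
  moreover have "z \<noteq> []" using assms(1) by (simp add: primitive_def)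
  ultimately have "c = a @ pow z k" using c pow_eq_prefix_iter[of z k] by simp
  then show ?thesis ..
qed

lemma conc_iter_eq_imp_eq:
  assumes "primitive z" "a \<frown> z\<^sup>\<omega> = c \<frown> z\<^sup>\<omega>" "\<forall>x. a \<noteq> x @ z" "\<forall>x. c \<noteq> x @ z"
  shows "a = c"
proof -
  have pow_free: "b = b'" if "b = b' @ pow z k" "\<forall>x. b \<noteq> x @ z" for b b' k
    using that by (cases k) (auto simp: pow_Suc_right)
  show ?thesis
  proof (cases "length a \<le> length c")
    case True
    then obtain k where "c = a @ pow z k" using conc_iter_eq_imp_pow[OF assms(1,2)] by blast
    then show ?thesis using pow_free assms(4) by blast
  next
    case False
    then obtain k where "a = c @ pow z k"
      using conc_iter_eq_imp_pow[OF assms(1) assms(2)[symmetric]] by fastforce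
    then show ?thesis using pow_free assms(3) by blast
  qed
qed

text \<open>N lies a multiple of the length of z past the start of the periodic part on the right, so
  cutting both sides at N leaves z^\<omega> itself on the right and a rotation of y iterated on the left.\<close>
lemma conc_iter_eq_imp_rotate:
  assumes "primitive y" "primitive z" "x \<frown> y\<^sup>\<omega> = x' \<frown> z\<^sup>\<omega>"
  shows "\<exists>k<length y. z = rotate k y"
proof -
  have ne: "y \<noteq> []" "z \<noteq> []" using assms(1,2) by (simp_all add: primitive_def)
  define N where "N = length x' + length z * length x"
  have "length x \<le> N" using ne(2) by (cases z) (simp_all add: N_def)
  then have "suffix N (x \<frown> y\<^sup>\<omega>) = (rotate (N - length x) y)\<^sup>\<omega>"
    using suffix_iter[OF ne(1)] by simp
  moreover have "suffix N (x' \<frown> z\<^sup>\<omega>) = z\<^sup>\<omega>"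
    using suffix_iter[OF ne(2)] by (simp add: N_def)
  ultimately have "rotate (N - length x) y = z"
    using primitive_iter_eq[OF primitive_rotate[OF assms(1)] assms(2)] assms(3) by simp
  then have "z = rotate ((N - length x) mod length y) y" by (simp flip: rotate_conv_mod)
  moreover have "(N - length x) mod length y < length y" using ne(1) by simp
  ultimately show ?thesis by blast
qed

lemma shortest_form_shift:
  assumes "primitive y" "shortest_form (x @ [hd y]) (tl y @ [hd y]) = (x', y')"
  shows "primitive y'" "y' = rotate 1 y" "x' \<frown> y'\<^sup>\<omega> = x \<frown> y\<^sup>\<omega>" "\<forall>x''. x' \<noteq> x'' @ y'"
proof -
  have ne: "y \<noteq> []" using assms(1) by (simp add: primitive_def)
  then have rot: "tl y @ [hd y] = rotate 1 y" by (simp add: rotate1_hd_tl)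
  have "rotate 1 y \<noteq> []" using ne by simp
  note sf = shortest_form_props[OF this assms(2)[unfolded rot]]
  show "primitive y'" "\<forall>x''. x' \<noteq> x'' @ y'" using sf(1,5) .
  then have "y' \<noteq> []" by (simp add: primitive_def)
  obtain j where j: "j \<ge> 1" "rotate 1 y = pow y' j" using sf(3) by blast
  have "(rotate 1 y)\<^sup>\<omega> = y'\<^sup>\<omega>" unfolding j(2) using iter_pow[OF \<open>y' \<noteq> []\<close> j(1)] .
  then have "rotate 1 y = y'" by (rule primitive_iter_eq[OF primitive_rotate[OF assms(1)] sf(1)])
  then show y': "y' = rotate 1 y" by (rule sym)
  have "prefix 1 (y\<^sup>\<omega>) = [hd y]" using ne by (simp add: subsequence_def hd_conv_nth)
  then have hd_rotate: "[hd y] \<frown> (rotate 1 y)\<^sup>\<omega> = y\<^sup>\<omega>"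
    using prefix_suffix[of "y\<^sup>\<omega>" 1, symmetric] suffix_iter[OF ne, of 1] by (simp only:)
  have "x' \<frown> y'\<^sup>\<omega> = x \<frown> ([hd y] \<frown> (rotate 1 y)\<^sup>\<omega>)" using sf(4) by simp
  also have "\<dots> = x \<frown> y\<^sup>\<omega>" by (simp only: hd_rotate)
  finally show "x' \<frown> y'\<^sup>\<omega> = x \<frown> y\<^sup>\<omega>" .
qed

lemma sf_seq_invariant:
  assumes "v \<noteq> []" "sf_seq u v k = (x, y)"
  shows "primitive y \<and> y = rotate k (snd (sf_seq u v 0)) \<and> x \<frown> y\<^sup>\<omega> = u \<frown> v\<^sup>\<omega>
    \<and> (\<forall>x'. x \<noteq> x' @ y)"
  using assms(2)
proof (induction k arbitrary: x y)
  case 0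
  then show ?case using shortest_form_props[OF assms(1)] by simp
next
  case (Suc k)
  obtain x0 y0 where k: "sf_seq u v k = (x0, y0)" by fastforce
  have IH: "primitive y0" "y0 = rotate k (snd (sf_seq u v 0))" "x0 \<frown> y0\<^sup>\<omega> = u \<frown> v\<^sup>\<omega>"
    using Suc.IH[OF k] by auto
  have "shortest_form (x0 @ [hd y0]) (tl y0 @ [hd y0]) = (x, y)" using Suc.prems k by simp
  note shift = shortest_form_shift[OF IH(1) this]
  have "y = rotate (Suc k) (snd (sf_seq u v 0))" using shift(2) IH(2) by simp
  then show ?case using shift(1,3,4) IH(3) by simp
qed

lemma sf_seq_decomposition:
  assumes "v \<noteq> []" "sf_seq u v k = (x, y)" "1 \<le> j"
  shows "pow y j \<noteq> []" "(x @ pow y i) \<frown> (pow y j)\<^sup>\<omega> = u \<frown> v\<^sup>\<omega>"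
proof -
  have y: "y \<noteq> []" "x \<frown> y\<^sup>\<omega> = u \<frown> v\<^sup>\<omega>"
    using sf_seq_invariant[OF assms(1,2)] by (auto simp: primitive_def)
  then have "0 < length (pow y j)" using assms(3) by simp
  then show "pow y j \<noteq> []" by (rule length_greater_0_conv[THEN iffD1])
  have "(x @ pow y i) \<frown> (pow y j)\<^sup>\<omega> = x \<frown> (pow y i \<frown> y\<^sup>\<omega>)"
    by (simp only: iter_pow[OF y(1) assms(3)] conc_conc)
  also have "\<dots> = u \<frown> v\<^sup>\<omega>" by (simp only: pow_conc_iter[OF y(1)] y(2))
  finally show "(x @ pow y i) \<frown> (pow y j)\<^sup>\<omega> = u \<frown> v\<^sup>\<omega>" .
qed

lemma shortest_form_in_sf_seq:
  assumes "v \<noteq> []" "v' \<noteq> []" "u' \<frown> v'\<^sup>\<omega> = u \<frown> v\<^sup>\<omega>"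
  shows "\<exists>k < length (snd (sf_seq u v 0)). sf_seq u v k = shortest_form u' v'"
proof -
  obtain x0 y0 where s0: "sf_seq u v 0 = (x0, y0)" by (cases "sf_seq u v 0")
  obtain x z where sf: "shortest_form u' v' = (x, z)" by (cases "shortest_form u' v'")
  note P = shortest_form_props[OF assms(2) sf]
  have I0: "primitive y0" "x0 \<frown> y0\<^sup>\<omega> = u \<frown> v\<^sup>\<omega>"
    using sf_seq_invariant[OF assms(1) s0] by auto
  then have "x0 \<frown> y0\<^sup>\<omega> = x \<frown> z\<^sup>\<omega>" using P(4) assms(3) by simp
  then obtain k where k: "k < length y0" "z = rotate k y0"
    using conc_iter_eq_imp_rotate[OF I0(1) P(1)] by blast
  obtain xk yk where sk: "sf_seq u v k = (xk, yk)" by (cases "sf_seq u v k")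
  have Ik: "yk = rotate k y0" "xk \<frown> yk\<^sup>\<omega> = u \<frown> v\<^sup>\<omega>" "\<forall>x'. xk \<noteq> x' @ yk"
    using sf_seq_invariant[OF assms(1) sk] s0 by auto
  then have "yk = z" using k(2) by simp
  moreover have "xk = x"
    using conc_iter_eq_imp_eq[OF P(1) _ _ P(5)] Ik P(4) assms(3) \<open>yk = z\<close> by simp
  ultimately show ?thesis using k(1) s0 sk sf by auto
qed

theorem proposition2:
  fixes u v :: "'a list" and L :: "'a dsym list set"
  assumes "v \<noteq> []"
    and "L = D_lang u v"
  shows "L = {map Sym u' @ [Dollar] @ map Sym v' | u' v'.
                v' \<noteq> [] \<and> u' \<frown> v'\<^sup>\<omega> = u \<frown> v\<^sup>\<omega>}"
    (is "_ = ?R")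
  unfolding assms(2) D_lang_def
proof (intro equalityI subsetI)
  fix w assume "w \<in> (\<Union>k<length (snd (sf_seq u v 0)).
      {map Sym (fst (sf_seq u v k) @ pow (snd (sf_seq u v k)) i) @ [Dollar]
        @ map Sym (pow (snd (sf_seq u v k)) j) | i j. j \<ge> 1})"
  then obtain k i j where j: "1 \<le> j" and w: "w = map Sym (fst (sf_seq u v k)
      @ pow (snd (sf_seq u v k)) i) @ [Dollar] @ map Sym (pow (snd (sf_seq u v k)) j)"
    by blast
  then show "w \<in> ?R" using sf_seq_decomposition[OF assms(1) surjective_pairing j] by blast
next
  fix w assume "w \<in> ?R"
  then obtain u' v' where w: "w = map Sym u' @ [Dollar] @ map Sym v'"
    and v': "v' \<noteq> []" "u' \<frown> v'\<^sup>\<omega> = u \<frown> v\<^sup>\<omega>" by blast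
  obtain k where k: "k < length (snd (sf_seq u v 0))" "sf_seq u v k = shortest_form u' v'"
    using shortest_form_in_sf_seq[OF assms(1) v'] by blast
  obtain x z where sf: "shortest_form u' v' = (x, z)" by (cases "shortest_form u' v'")
  obtain i j where "u' = x @ pow z i" "v' = pow z j" "1 \<le> j"
    using shortest_form_props(2,3)[OF v'(1) sf] by blast
  moreover have "sf_seq u v k = (x, z)" using k(2) sf by simp
  ultimately have "1 \<le> j" "w = map Sym (fst (sf_seq u v k) @ pow (snd (sf_seq u v k)) i)
      @ [Dollar] @ map Sym (pow (snd (sf_seq u v k)) j)" using w by simp_all
  then show "w \<in> (\<Union>k<length (snd (sf_seq u v 0)).
      {map Sym (fst (sf_seq u v k) @ pow (snd (sf_seq u v k)) i) @ [Dollar]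
        @ map Sym (pow (snd (sf_seq u v k)) j) | i j. j \<ge> 1})"
    using k(1) by blast
qed

end
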